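(* Let $f_{s_1d}, f_{s_1r}, f_{rd}, g_{rd}^{s_1}, g_{s_1d}^{r}\in[0,1]$ satisfy $0\le g_{s_1d}^{r}\le f_{s_1d}$, $0\le g_{rd}^{s_1}< f_{rd}$, set $T_1=(1-f_{s_1d})f_{s_1r}$ and assume $T_1>0$. For $\alpha\in[0,1]$ define $$\mu_1^{\mathrm{DBC}}(\alpha)=(1-\alpha)(f_{s_1d}+T_1)+\alpha\,g_{s_1d}^{r},\qquad \mu_{u_1}^{\mathrm{DBC}}(\alpha)=\frac{\alpha f_{rd}}{(1-\alpha)T_1+\alpha f_{rd}-\alpha\,g_{rd}^{s_1}}\,\mu_1^{\mathrm{DBC}}(\alpha).$$ If $$f_{rd}-g_{rd}^{s_1}\le \frac{(T_1+g_{rd}^{s_1})^2(f_{s_1d}+T_1)}{T_1(f_{s_1d}+T_1-g_{s_1d}^{r})}-(T_1+2g_{rd}^{s_1}),$$ then $$\max_{0\le\alpha\le 1}\min\{\mu_1^{\mathrm{DBC}}(\alpha),\mu_{u_1}^{\mathrm{DBC}}(\alpha)\}=\Big(1-\frac{T_1}{T_1+g_{rd}^{s_1}}\Big)(f_{s_1d}+T_1)+\frac{T_1}{T_1+g_{rd}^{s_1}}\,g_{s_1d}^{r},$$ attained at $\alpha^*=T_1/(T_1+g_{rd}^{s_1})$.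
   Context: $f_{mn}$ denotes the probability that link $(m,n)$ is not in outage and $g_{mn}^{I}$ the probability that it is not in outage under simultaneous interference from node $I$ (so $g_{mn}^I\le f_{mn}$). This is the optimization of the maximal stable throughput of a single source $s_1$ in the decision-based cooperative scheme over the probability $\alpha$ that the relay (without sensing) transmits in a slot. *)

theory Defs
  imports Complex_Main
begin

definition T1 :: "real \<Rightarrow> real \<Rightarrow> real" where
  "T1 fs1d fs1r = (1 - fs1d) * fs1r"

definition mu1_DBC :: "real \<Rightarrow> real \<Rightarrow> real \<Rightarrow> real \<Rightarrow> real" where
  "mu1_DBC fs1d fs1r gs1d_r \<alpha> = (1 - \<alpha>) * (fs1d + T1 fs1d fs1r) + \<alpha> * gs1d_r"

definition muu1_DBC :: "real \<Rightarrow> real \<Rightarrow> real \<Rightarrow> real \<Rightarrow> real \<Rightarrow> real \<Rightarrow> real" where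
  "muu1_DBC fs1d fs1r frd grd_s1 gs1d_r \<alpha> =
     (\<alpha> * frd / ((1 - \<alpha>) * T1 fs1d fs1r + \<alpha> * frd - \<alpha> * grd_s1)) * mu1_DBC fs1d fs1r gs1d_r \<alpha>"

end

theory Submission
  imports Defs
begin

text \<open>Write \<open>F = f_s1d + T1\<close>, \<open>G = g_s1d^r\<close>, \<open>D = f_rd - g_rd^s1\<close> and \<open>g = g_rd^s1\<close>, so that
  \<open>\<mu>\<^sub>1(\<alpha>) = (1-\<alpha>) F + \<alpha> G\<close> decreases in \<open>\<alpha>\<close> and
  \<open>\<mu>\<^sub>u\<^sub>1(\<alpha>) = \<alpha> (D + g) / ((1-\<alpha>) T1 + \<alpha> D) \<cdot> \<mu>\<^sub>1(\<alpha>)\<close>.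
  At \<open>\<alpha>* = T1/(T1+g)\<close> the denominator equals \<open>\<alpha>* (D + g)\<close>, so both throughputs coincide.
  Right of \<open>\<alpha>*\<close> the minimum is at most \<open>\<mu>\<^sub>1\<close>, which only decreases.  Left of \<open>\<alpha>*\<close>,
  clearing denominators turns \<open>\<mu>\<^sub>u\<^sub>1(\<alpha>) \<le> \<mu>\<^sub>1(\<alpha>*)\<close> into the nonnegativity of a quadratic in
  \<open>(T1+g)\<alpha> - T1 \<le> 0\<close>: its leading coefficient is \<open>(D + g)(F - G) \<ge> 0\<close>, and the hypothesis,
  with denominators cleared, says precisely that its linear coefficient is \<open>\<le> 0\<close>.\<close>

lemma cleared_crossing_condition:
  fixes T g D F G :: real
  assumes "T > 0" "g \<ge> 0" "D > 0" "G \<le> F"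
    and "D \<le> (T + g)^2 * F / (T * (F - G)) - (T + 2 * g)"
  shows "T * (F - G) * (D + T + 2 * g) \<le> (T + g)^2 * F"
proof -
  have "G \<noteq> F"
  proof
    assume "G = F"
    with assms(5) have "D \<le> - (T + 2 * g)" by simp
    with assms(1-3) show False by simp
  qed
  then have "T * (F - G) > 0" using assms(1,4) by simp
  moreover have "D + (T + 2 * g) \<le> (T + g)^2 * F / (T * (F - G))" using assms(5) by simp
  ultimately show ?thesis by (simp add: pos_le_divide_eq algebra_simps)
qed

lemma crossing_gap_identity:
  fixes T g D F G s x :: real
  assumes "s = T + g"
  defines "K \<equiv> (s * F - T * (F - G)) * (D - T) - (D + g) * (s * F - 2 * T * (F - G))"
  shows "s * ((s * F - T * (F - G)) * ((1 - x) * T + x * D) - s * (x * (D + g) * ((1 - x) * F + x * G)))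
       = K * (s * x - T) + (D + g) * (F - G) * (s * x - T)^2"
  unfolding K_def assms by (simp add: algebra_simps power2_eq_square)

lemma relay_throughput_le_crossing:
  fixes T g D F G x :: real
  assumes "T > 0" "g \<ge> 0" "D > 0" "G \<le> F"
    and "T * (F - G) * (D + T + 2 * g) \<le> (T + g)^2 * F"
    and "0 \<le> x" "x * (T + g) \<le> T"
  shows "x * (D + g) / ((1 - x) * T + x * D) * ((1 - x) * F + x * G)
           \<le> (1 - T / (T + g)) * F + T / (T + g) * G"
proof -
  define s where "s = T + g"
  define K where "K = (s * F - T * (F - G)) * (D - T) - (D + g) * (s * F - 2 * T * (F - G))"
  define V where "V = (1 - T / s) * F + T / s * G"
  have s: "s > 0" using assms(1,2) by (simp add: s_def)
  have den: "(1 - x) * T + x * D > 0"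
  proof -
    have "x * s \<le> 1 * s" using assms(2,7) by (simp add: s_def)
    then have "x \<le> 1" using s by (simp only: mult_le_cancel_right_pos)
    then have "(1 - x) * T \<ge> 0" "x * D \<ge> 0" using assms(1,3,6) by simp_all
    moreover have "(1 - x) * T > 0 \<or> x * D > 0" using assms(1,3,6) \<open>x \<le> 1\<close>
      by (cases "x = 0") simp_all
    ultimately show ?thesis by linarith
  qed
  have "K \<le> 0" using assms(5) by (simp add: K_def s_def algebra_simps power2_eq_square)
  moreover have "s * x - T \<le> 0" using assms(7) by (simp add: s_def algebra_simps)
  ultimately have "K * (s * x - T) + (D + g) * (F - G) * (s * x - T)^2 \<ge> 0"
    using assms(2-4) by (simp add: mult_nonpos_nonpos add_nonneg_nonneg)
  then have "s * ((s * F - T * (F - G)) * ((1 - x) * T + x * D) - s * (x * (D + g) * ((1 - x) * F + x * G))) \<ge> 0"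
    using crossing_gap_identity[OF s_def, where D = D and F = F and G = G and x = x] by (simp add: K_def)
  then have "s * (x * (D + g) * ((1 - x) * F + x * G)) \<le> (s * F - T * (F - G)) * ((1 - x) * T + x * D)"
    using s by (simp add: zero_le_mult_iff)
  also have "s * F - T * (F - G) = s * V" using s by (simp add: V_def field_simps)
  finally have "x * (D + g) * ((1 - x) * F + x * G) \<le> V * ((1 - x) * T + x * D)"
    using s by (simp add: mult.assoc)
  then show ?thesis using den by (simp add: V_def s_def pos_divide_le_eq)
qed

lemma relay_throughput_at_crossing:
  fixes a T g D M :: real
  assumes "a * (T + g) = T" "a \<noteq> 0" "D + g \<noteq> 0"
  shows "a * (D + g) / ((1 - a) * T + a * D) * M = M"
proof -
  have "(1 - a) * T + a * D = a * (D + g)"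
    using assms(1) by (simp add: algebra_simps)
  then show ?thesis using assms(2,3) by simp
qed

lemma crossing_maximizes_min_throughput:
  fixes T g D F G :: real
  assumes T: "T > 0" and g: "g \<ge> 0" and D: "D > 0" and GF: "G \<le> F"
    and cond: "T * (F - G) * (D + T + 2 * g) \<le> (T + g)^2 * F"
  defines "\<mu> \<equiv> \<lambda>x. (1 - x) * F + x * G"
    and "\<nu> \<equiv> \<lambda>x. x * (D + g) / ((1 - x) * T + x * D) * ((1 - x) * F + x * G)"
    and "a \<equiv> T / (T + g)"
  shows "a \<in> {0..1}" and "min (\<mu> a) (\<nu> a) = \<mu> a"
    and "\<And>x. x \<in> {0..1} \<Longrightarrow> min (\<mu> x) (\<nu> x) \<le> \<mu> a"
proof -
  show "a \<in> {0..1}" using T g by (simp add: a_def field_simps)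
  have aS: "a * (T + g) = T" using T g by (simp add: a_def)
  show "min (\<mu> a) (\<nu> a) = \<mu> a"
    using relay_throughput_at_crossing[OF aS] T g D by (simp add: \<nu>_def \<mu>_def a_def)
  fix x :: real
  assume x: "x \<in> {0..1}"
  show "min (\<mu> x) (\<nu> x) \<le> \<mu> a"
  proof (cases "x \<le> a")
    case True
    then have "x * (T + g) \<le> T" using aS T g by (metis mult_right_mono add_nonneg_nonneg less_imp_le)
    then have "\<nu> x \<le> \<mu> a"
      using relay_throughput_le_crossing[OF T g D GF cond] x by (simp add: \<nu>_def \<mu>_def a_def)
    then show ?thesis by (simp add: min.coboundedI2)
  next
    case False
    then have "\<mu> x \<le> \<mu> a"
      using GF mult_right_mono[of a x "F - G"] by (simp add: \<mu>_def algebra_simps)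
    then show ?thesis by (simp add: min.coboundedI1)
  qed
qed

lemma muu1_DBC_eq:
  "muu1_DBC fs1d fs1r frd grd_s1 gs1d_r x
     = x * frd / ((1 - x) * T1 fs1d fs1r + x * (frd - grd_s1)) * mu1_DBC fs1d fs1r gs1d_r x"
  unfolding muu1_DBC_def by (simp add: algebra_simps)

theorem lemma2:
  fixes fs1d fs1r frd grd_s1 gs1d_r :: real
  assumes "fs1d \<in> {0..1}" "fs1r \<in> {0..1}" "frd \<in> {0..1}" "grd_s1 \<in> {0..1}" "gs1d_r \<in> {0..1}"
    and "0 \<le> gs1d_r" "gs1d_r \<le> fs1d"
    and "0 \<le> grd_s1" "grd_s1 < frd"
    and "T1 fs1d fs1r > 0"
    and "frd - grd_s1 \<le>
           (T1 fs1d fs1r + grd_s1)^2 * (fs1d + T1 fs1d fs1r)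
             / (T1 fs1d fs1r * (fs1d + T1 fs1d fs1r - gs1d_r))
           - (T1 fs1d fs1r + 2 * grd_s1)"
  shows "let a = T1 fs1d fs1r / (T1 fs1d fs1r + grd_s1);
             V = (1 - a) * (fs1d + T1 fs1d fs1r) + a * gs1d_r;
             h = (\<lambda>\<alpha>. min (mu1_DBC fs1d fs1r gs1d_r \<alpha>) (muu1_DBC fs1d fs1r frd grd_s1 gs1d_r \<alpha>))
         in a \<in> {0..1} \<and> h a = V \<and> (\<forall>\<alpha>\<in>{0..1}. h \<alpha> \<le> V)"
proof -
  define T where "T = T1 fs1d fs1r"
  define g where "g = grd_s1"
  define D where "D = frd - grd_s1"
  define F where "F = fs1d + T"
  define G where "G = gs1d_r"
  have T: "T > 0" and g: "g \<ge> 0" and D: "D > 0" and GF: "G \<le> F"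
    using assms by (simp_all add: T_def g_def D_def F_def G_def)
  have cond: "T * (F - G) * (D + T + 2 * g) \<le> (T + g)^2 * F"
    using cleared_crossing_condition[OF T g D GF] assms(11)
    by (simp add: T_def g_def D_def F_def G_def)
  have mu1: "mu1_DBC fs1d fs1r gs1d_r = (\<lambda>x. (1 - x) * F + x * G)"
    by (simp add: fun_eq_iff mu1_DBC_def F_def G_def T_def)
  have muu1: "muu1_DBC fs1d fs1r frd grd_s1 gs1d_r
      = (\<lambda>x. x * (D + g) / ((1 - x) * T + x * D) * ((1 - x) * F + x * G))"
    by (simp add: fun_eq_iff muu1_DBC_eq mu1 T_def D_def g_def)
  show ?thesis
    using crossing_maximizes_min_throughput[OF T g D GF cond]
    by (simp add: Let_def mu1 muu1 F_def G_def T_def g_def)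
qed

end
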